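(* Let $\mathcal{G}$ be a group prevariety over a finite alphabet $A$, let $\alpha:A^*\to M$ be a surjective morphism into a finite monoid, and let $N$ be the $\mathcal{G}$-kernel of $\alpha$. Then: (1) every $\mathcal{G}$-orbit for $\alpha$ is a subset of $N$; (2) $N$ is exactly the $\mathcal{G}$-orbit of $1_M$ for $\alpha$.
   Context: Fix a finite alphabet $A$. A prevariety is a class of regular languages over $A$ containing $\emptyset$ and $A^*$, closed under union, intersection, complement, and under the quotients $u^{-1}L=\{w\mid uw\in L\}$ and $Lu^{-1}=\{w\mid wu\in L\}$; a group prevariety is a prevariety all of whose languages are recognized by morphisms into finite groups. $L_1$ is $\mathcal{G}$-separable from $L_2$ if some $K\in\mathcal{G}$ satisfies $L_1\subseteq K$, $K\cap L_2=\emptyset$. For $\alpha:A^*\to M$: $(s,t)\in M^2$ is a $\mathcal{G}$-pair if $\alpha^{-1}(s)$ is not $\mathcal{G}$-separable from $\alpha^{-1}(t)$; for an idempotent $e\in M$, the $\mathcal{G}$-orbit of $e$ is $\{ese\mid (e,s)\text{ is a }\mathcal{G}\text{-pair}\}$; the $\mathcal{G}$-orbits for $\alpha$ are the $\mathcal{G}$-orbits of the idempotents of $M$; the $\mathcal{G}$-kernel of $\alpha$ is the set of $s\in M$ such that $\{\varepsilon\}$ is not $\mathcal{G}$-separable from $\alpha^{-1}(s)$. *)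

theory Defs
  imports "HOL-Algebra.Group"
begin

text \<open>Words over a finite alphabet: the alphabet A is the (finite) type 'a,
  words are lists, languages are sets of lists.\<close>

definition regular :: "'a list set \<Rightarrow> bool" where
  "regular L \<longleftrightarrow> (\<exists>(Q::nat set) \<delta> q0 F. finite Q \<and> q0 \<in> Q \<and>
      (\<forall>q\<in>Q. \<forall>a. \<delta> q a \<in> Q) \<and> F \<subseteq> Q \<and> L = {w. foldl \<delta> q0 w \<in> F})"

definition lquot :: "'a list \<Rightarrow> 'a list set \<Rightarrow> 'a list set" where
  "lquot u L = {w. u @ w \<in> L}"

definition rquot :: "'a list set \<Rightarrow> 'a list \<Rightarrow> 'a list set" where
  "rquot L u = {w. w @ u \<in> L}"

definition prevariety :: "'a list set set \<Rightarrow> bool" where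
  "prevariety C \<longleftrightarrow> (\<forall>L\<in>C. regular L) \<and> {} \<in> C \<and> UNIV \<in> C \<and>
     (\<forall>K\<in>C. \<forall>L\<in>C. K \<union> L \<in> C \<and> K \<inter> L \<in> C) \<and>
     (\<forall>L\<in>C. - L \<in> C) \<and>
     (\<forall>L\<in>C. \<forall>u. lquot u L \<in> C \<and> rquot L u \<in> C)"

definition word_morphism :: "('a list \<Rightarrow> 'm) \<Rightarrow> ('m, 'b) monoid_scheme \<Rightarrow> bool" where
  "word_morphism h M \<longleftrightarrow> (\<forall>w. h w \<in> carrier M) \<and> h [] = \<one>\<^bsub>M\<^esub> \<and>
     (\<forall>u v. h (u @ v) = h u \<otimes>\<^bsub>M\<^esub> h v)"

text \<open>L is recognized by a morphism into a finite group (carriers on nat suffice,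
  since every finite group is isomorphic to one with carrier a set of naturals).\<close>
definition group_recognizable :: "'a list set \<Rightarrow> bool" where
  "group_recognizable L \<longleftrightarrow> (\<exists>(G::nat monoid) h F. group G \<and> finite (carrier G) \<and>
      word_morphism h G \<and> F \<subseteq> carrier G \<and> L = h -` F)"

definition group_prevariety :: "'a list set set \<Rightarrow> bool" where
  "group_prevariety C \<longleftrightarrow> prevariety C \<and> (\<forall>L\<in>C. group_recognizable L)"

definition separable :: "'a list set set \<Rightarrow> 'a list set \<Rightarrow> 'a list set \<Rightarrow> bool" where
  "separable C L1 L2 \<longleftrightarrow> (\<exists>K\<in>C. L1 \<subseteq> K \<and> K \<inter> L2 = {})"

definition C_pair :: "'a list set set \<Rightarrow> ('a list \<Rightarrow> 'm) \<Rightarrow> 'm \<Rightarrow> 'm \<Rightarrow> bool" where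
  "C_pair C \<alpha> s t \<longleftrightarrow> \<not> separable C (\<alpha> -` {s}) (\<alpha> -` {t})"

definition idempotent_el :: "('m, 'b) monoid_scheme \<Rightarrow> 'm \<Rightarrow> bool" where
  "idempotent_el M e \<longleftrightarrow> e \<in> carrier M \<and> e \<otimes>\<^bsub>M\<^esub> e = e"

definition C_orbit :: "'a list set set \<Rightarrow> ('a list \<Rightarrow> 'm) \<Rightarrow> ('m, 'b) monoid_scheme \<Rightarrow> 'm \<Rightarrow> 'm set" where
  "C_orbit C \<alpha> M e = {e \<otimes>\<^bsub>M\<^esub> s \<otimes>\<^bsub>M\<^esub> e | s. s \<in> carrier M \<and> C_pair C \<alpha> e s}"

definition C_kernel :: "'a list set set \<Rightarrow> ('a list \<Rightarrow> 'm) \<Rightarrow> ('m, 'b) monoid_scheme \<Rightarrow> 'm set" where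
  "C_kernel C \<alpha> M = {s \<in> carrier M. \<not> separable C {[]} (\<alpha> -` {s})}"

end

theory Submission
  imports Defs "HOL-Algebra.Multiplicative_Group"
begin

text \<open>Suppose some \<open>K \<in> C\<close> contains the empty word and misses the preimage of \<open>ese\<close>, and
  let \<open>K\<close> be recognized by a morphism \<open>h\<close> into a finite group of order \<open>n\<close>. For every word
  \<open>y\<close> with \<open>\<alpha> y = e\<close>, the word \<open>y^(2n-1) y y^n\<close> has \<open>h\<close>-image \<open>1 = h []\<close>, hence lies in \<open>K\<close>.
  So the union, over all such \<open>y\<close>, of the quotients \<open>{w. y^(2n-1) w y^n \<in> K}\<close> contains the
  preimage of \<open>e\<close>; it lies in \<open>C\<close> because \<open>K\<close> has only finitely many quotients. It misses
  the preimage of \<open>s\<close>, since \<open>y^(2n-1) w y^n\<close> has \<open>\<alpha>\<close>-image \<open>e (\<alpha> w) e\<close>. Thus \<open>(e, s)\<close> is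
  not a pair.\<close>

lemma prevariety_Union:
  assumes "prevariety C" "finite S" "S \<subseteq> C"
  shows "\<Union>S \<in> C"
  using assms(2,3)
proof (induction S rule: finite_induct)
  case empty
  then show ?case using assms(1) by (simp add: prevariety_def)
next
  case (insert L S)
  then show ?case using assms(1) by (simp add: prevariety_def)
qed

lemma prevariety_quotient:
  assumes "prevariety C" "K \<in> C"
  shows "{w. u @ w @ v \<in> K} \<in> C"
proof -
  have "{w. u @ w @ v \<in> K} = rquot (lquot u K) v"
    by (simp add: lquot_def rquot_def)
  then show ?thesis using assms by (simp add: prevariety_def)
qed

lemma finite_quotients_if_recognized:
  assumes "word_morphism h G" "finite (carrier G)" "K = h -` F"
  shows "finite {{w. u @ w @ v \<in> K} | u v. True}"
proof -
  let ?quot = "\<lambda>(a, b). {w. a \<otimes>\<^bsub>G\<^esub> (h w \<otimes>\<^bsub>G\<^esub> b) \<in> F}"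
  have "{{w. u @ w @ v \<in> K} | u v. True} \<subseteq> ?quot ` (carrier G \<times> carrier G)"
  proof clarify
    fix u v :: "'a list"
    have "{w. u @ w @ v \<in> K} = ?quot (h u, h v)"
      using assms(1,3) by (simp add: word_morphism_def)
    moreover have "(h u, h v) \<in> carrier G \<times> carrier G"
      using assms(1) by (simp add: word_morphism_def)
    ultimately show "{w. u @ w @ v \<in> K} \<in> ?quot ` (carrier G \<times> carrier G)" by blast
  qed
  then show ?thesis using assms(2) finite_subset by blast
qed

lemma word_morphism_concat_replicate:
  assumes "monoid M" "word_morphism h M"
  shows "h (concat (replicate k y)) = h y [^]\<^bsub>M\<^esub> (k::nat)"
proof (induction k)
  case 0
  then show ?case using assms(2) by (simp add: word_morphism_def)
next
  case (Suc k)
  then show ?case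
    using assms monoid.nat_pow_Suc2 by (fastforce simp: word_morphism_def)
qed

lemma idempotent_el_nat_pow:
  assumes "monoid M" "idempotent_el M e" "(k::nat) > 0"
  shows "e [^]\<^bsub>M\<^esub> k = e"
  using assms(3)
proof (induction k rule: nat_induct_non_zero)
  case 1
  then show ?case using assms(1,2) by (simp add: idempotent_el_def monoid.nat_pow_Suc2)
next
  case (Suc k)
  then show ?case using assms(1,2) by (simp add: idempotent_el_def monoid.nat_pow_Suc)
qed

lemma separable_subset:
  assumes "separable C L1 L2" "L1' \<subseteq> L1"
  shows "separable C L1' L2"
  using assms unfolding separable_def by blast

lemma concat_replicate_around:
  "concat (replicate a y) @ y @ concat (replicate b y) = concat (replicate (a + Suc b) y)"
  by (simp only: replicate_add replicate.simps concat_append concat.simps)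

lemma word_morphism_concat_replicate_order:
  assumes "group G" "finite (carrier G)" "word_morphism h G"
  shows "h (concat (replicate (k * order G) y)) = \<one>\<^bsub>G\<^esub>"
proof -
  interpret G: group G by fact
  have "h y \<in> carrier G" using assms(3) by (simp add: word_morphism_def)
  then show ?thesis
    using word_morphism_concat_replicate[OF G.monoid_axioms assms(3)] assms(2)
    by (simp add: G.nat_pow_pow[symmetric] G.pow_order_eq_1 mult.commute)
qed

lemma group_prevariety_Union_quotients:
  assumes "group_prevariety C" "K \<in> C" "Q \<subseteq> {{w. u @ w @ v \<in> K} | u v. True}"
  shows "\<Union>Q \<in> C"
proof -
  have pv: "prevariety C" using assms(1) by (simp add: group_prevariety_def)
  have "group_recognizable K" using assms(1,2) by (simp add: group_prevariety_def)
  then obtain G :: "nat monoid" and h F where "finite (carrier G)" "word_morphism h G" "K = h -` F"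
    unfolding group_recognizable_def by blast
  then have "finite {{w. u @ w @ v \<in> K} | u v. True}"
    using finite_quotients_if_recognized by blast
  with assms(3) have "finite Q" by (rule finite_subset)
  moreover have "Q \<subseteq> C"
  proof
    fix L assume "L \<in> Q"
    then obtain u v where "L = {w. u @ w @ v \<in> K}" using assms(3) by blast
    then show "L \<in> C" using prevariety_quotient[OF pv assms(2)] by simp
  qed
  ultimately show ?thesis by (rule prevariety_Union[OF pv])
qed

lemma separable_idempotent_if_separable_Nil:
  assumes gp: "group_prevariety C" and "monoid M" and \<alpha>: "word_morphism \<alpha> M"
    and e: "idempotent_el M e" and s: "s \<in> carrier M"
    and sep: "separable C {[]} (\<alpha> -` {e \<otimes>\<^bsub>M\<^esub> s \<otimes>\<^bsub>M\<^esub> e})"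
  shows "separable C (\<alpha> -` {e}) (\<alpha> -` {s})"
proof -
  interpret M: monoid M by fact
  obtain K where "K \<in> C" and Nil_in_K: "[] \<in> K"
    and disjoint: "K \<inter> \<alpha> -` {e \<otimes>\<^bsub>M\<^esub> s \<otimes>\<^bsub>M\<^esub> e} = {}"
    using sep unfolding separable_def by auto
  have "group_recognizable K" using gp \<open>K \<in> C\<close> by (simp add: group_prevariety_def)
  then obtain G :: "nat monoid" and h F where "group G" "finite (carrier G)"
    and h: "word_morphism h G" and K: "K = h -` F"
    unfolding group_recognizable_def by blast
  define n where "n = order G"
  have "n > 0"
    using \<open>finite (carrier G)\<close> monoid.order_gt_0_iff_finite[OF group.is_monoid[OF \<open>group G\<close>]]
    by (simp add: n_def)
  define pow where "pow y k = concat (replicate k y)" for y :: "'a list" and k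
  define S where "S = \<Union> {{w. pow y (2 * n - 1) @ w @ pow y n \<in> K} | y. \<alpha> y = e}"
  have "S \<in> C"
    unfolding S_def by (rule group_prevariety_Union_quotients[OF gp \<open>K \<in> C\<close>]) blast
  moreover have "\<alpha> -` {e} \<subseteq> S"
  proof
    fix y assume "y \<in> \<alpha> -` {e}"
    have "pow y (2 * n - 1) @ y @ pow y n = pow y (3 * n)"
      using concat_replicate_around[of "2 * n - 1" y n] \<open>n > 0\<close> by (simp add: pow_def)
    moreover have "h (pow y (3 * n)) = h []"
      using word_morphism_concat_replicate_order[OF \<open>group G\<close> \<open>finite (carrier G)\<close> h] h
      by (simp add: pow_def n_def word_morphism_def)
    ultimately have "pow y (2 * n - 1) @ y @ pow y n \<in> K" using Nil_in_K K by simp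
    then show "y \<in> S" using \<open>y \<in> \<alpha> -` {e}\<close> unfolding S_def by blast
  qed
  moreover have "S \<inter> \<alpha> -` {s} = {}"
  proof (rule ccontr)
    assume "S \<inter> \<alpha> -` {s} \<noteq> {}"
    then obtain w y where "\<alpha> w = s" "\<alpha> y = e" and in_K: "pow y (2 * n - 1) @ w @ pow y n \<in> K"
      unfolding S_def by auto
    have "\<alpha> (pow y k) = e" if "k > 0" for k
      using word_morphism_concat_replicate[OF \<open>monoid M\<close> \<alpha>] idempotent_el_nat_pow[OF \<open>monoid M\<close> e that]
      by (simp add: pow_def \<open>\<alpha> y = e\<close>)
    then have "\<alpha> (pow y (2 * n - 1) @ w @ pow y n) = e \<otimes>\<^bsub>M\<^esub> s \<otimes>\<^bsub>M\<^esub> e"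
      using \<alpha> \<open>n > 0\<close> \<open>\<alpha> w = s\<close> e s by (simp add: word_morphism_def idempotent_el_def M.m_assoc)
    then show False using in_K disjoint by blast
  qed
  ultimately show ?thesis unfolding separable_def by blast
qed

theorem lemma5p10:
  fixes C :: "('a::finite) list set set"
    and M :: "('m, 'b) monoid_scheme"
    and \<alpha> :: "'a list \<Rightarrow> 'm"
  assumes "group_prevariety C"
    and "monoid M" and "finite (carrier M)"
    and "word_morphism \<alpha> M" and "\<alpha> ` UNIV = carrier M"
  shows "(\<forall>e. idempotent_el M e \<longrightarrow> C_orbit C \<alpha> M e \<subseteq> C_kernel C \<alpha> M)
         \<and> C_kernel C \<alpha> M = C_orbit C \<alpha> M \<one>\<^bsub>M\<^esub>"
proof -
  interpret M: monoid M by fact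
  have orbit_in_kernel: "C_orbit C \<alpha> M e \<subseteq> C_kernel C \<alpha> M" if e: "idempotent_el M e" for e
    using separable_idempotent_if_separable_Nil[OF assms(1,2,4) e] e
    by (auto simp: C_orbit_def C_kernel_def C_pair_def idempotent_el_def)
  have "C_kernel C \<alpha> M \<subseteq> C_orbit C \<alpha> M \<one>\<^bsub>M\<^esub>"
  proof
    fix s assume "s \<in> C_kernel C \<alpha> M"
    moreover have "[] \<in> \<alpha> -` {\<one>\<^bsub>M\<^esub>}" using assms(4) by (simp add: word_morphism_def)
    ultimately have "C_pair C \<alpha> \<one>\<^bsub>M\<^esub> s" "s \<in> carrier M"
      using separable_subset[of C _ _ "{[]}"] by (auto simp: C_kernel_def C_pair_def)
    then show "s \<in> C_orbit C \<alpha> M \<one>\<^bsub>M\<^esub>" unfolding C_orbit_def by force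
  qed
  moreover have "idempotent_el M \<one>\<^bsub>M\<^esub>" by (simp add: idempotent_el_def)
  ultimately show ?thesis using orbit_in_kernel by blast
qed

end
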